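(* Let $L\subset\mathbb{R}^{2n}$ be a Lagrangian submanifold and let $\Delta\subset TL$ be the set of critical points of the map $\Psi:TL\to\mathbb{R}^{2n}$, $\Psi(X,W)=X+W$. Suppose there exists $X\in L$ with $\Delta\cap T_XL=\{0\}$. Then $\dim L\in\{1,2\}$.
   Context: $\mathbb{R}^{2n}$ carries its standard symplectic structure; $TL$ is the tangent bundle of $L$, viewed with $T_XL\subset\mathbb{R}^{2n}$, and $0$ denotes the zero vector of $T_XL$. *)

theory Defs
  imports "HOL-Analysis.Analysis"
begin

coinductive smooth_on :: "'a::real_normed_vector set \<Rightarrow> ('a \<Rightarrow> 'b::real_normed_vector) \<Rightarrow> bool"
  where "\<lbrakk>\<forall>x\<in>S. f differentiable (at x);
          \<forall>v. smooth_on S (\<lambda>x. frechet_derivative f (at x) v)\<rbrakk> \<Longrightarrow> smooth_on S f"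

definition omega :: "((real^'n) \<times> (real^'n)) \<Rightarrow> ((real^'n) \<times> (real^'n)) \<Rightarrow> real" where
  "omega p q = fst p \<bullet> snd q - snd p \<bullet> fst q"

definition local_param :: "('k::euclidean_space \<Rightarrow> 'a::euclidean_space) \<Rightarrow> 'k set \<Rightarrow> 'a set \<Rightarrow> bool" where
  "local_param \<phi> V L \<longleftrightarrow> open V \<and> smooth_on V \<phi> \<and> inj_on \<phi> V
     \<and> (\<forall>u\<in>V. inj (frechet_derivative \<phi> (at u)))
     \<and> (\<exists>U. open U \<and> \<phi> ` V = L \<inter> U)
     \<and> continuous_on (\<phi> ` V) (inv_into V \<phi>)"

definition submanifold_dim :: "'k::euclidean_space itself \<Rightarrow> 'a::euclidean_space set \<Rightarrow> bool" where
  "submanifold_dim _ L \<longleftrightarrow>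
     (\<forall>p\<in>L. \<exists>(\<phi>::'k \<Rightarrow> 'a) V u. local_param \<phi> V L \<and> u \<in> V \<and> \<phi> u = p)"

definition tangent_space :: "'k::euclidean_space itself \<Rightarrow> 'a::euclidean_space set \<Rightarrow> 'a \<Rightarrow> 'a set" where
  "tangent_space _ L X = {w. \<exists>(\<phi>::'k \<Rightarrow> 'a) V u. local_param \<phi> V L \<and> u \<in> V \<and> \<phi> u = X
        \<and> w \<in> range (frechet_derivative \<phi> (at u))}"

definition lagrangian :: "((real^'n) \<times> (real^'n)) set \<Rightarrow> bool" where
  "lagrangian L \<longleftrightarrow> submanifold_dim TYPE(real^'n) L \<and>
     (\<forall>X\<in>L. \<forall>v\<in>tangent_space TYPE(real^'n) L X. \<forall>w\<in>tangent_space TYPE(real^'n) L X. omega v w = 0)"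

(* (X,W) \<in> TL is a critical point of Psi(X,W) = X + W: in the induced chart
   (u,a) \<mapsto> (phi u, Dphi(u) a) of TL, the derivative of Psi is not surjective *)
definition Psi_critical :: "((real^'n) \<times> (real^'n)) set \<Rightarrow> ((real^'n) \<times> (real^'n)) \<Rightarrow> ((real^'n) \<times> (real^'n)) \<Rightarrow> bool" where
  "Psi_critical L X W \<longleftrightarrow> X \<in> L \<and> W \<in> tangent_space TYPE(real^'n) L X \<and>
     (\<exists>(\<phi>::real^'n \<Rightarrow> (real^'n) \<times> (real^'n)) V u a. local_param \<phi> V L \<and> u \<in> V \<and> \<phi> u = X
        \<and> frechet_derivative \<phi> (at u) a = W
        \<and> \<not> surj (frechet_derivative (\<lambda>(u', a'). \<phi> u' + frechet_derivative \<phi> (at u') a') (at (u, a))))"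

end

theory Submission
  imports Defs
begin

text \<open>Write \<open>L\<close> near \<open>X\<close> as the image of a chart \<open>\<phi>\<close>. Differentiating the Lagrangian
  condition \<open>\<omega>(D\<phi> a, D\<phi> k) = 0\<close> shows that \<open>(a, k) \<mapsto> \<omega>(D\<^sup>2\<phi>(\<cdot>, a), D\<phi> k)\<close> is
  symmetric. Since \<open>\<Psi>\<close> is a submersion at every nonzero \<open>(X, W)\<close> and \<open>\<omega>\<close> pairs
  nondegenerately with the isotropic image of \<open>D\<phi>\<close>, it is also nonsingular. This turns
  \<open>\<real>\<^sup>n\<close> into a commutative real division algebra, and by Hopf's theorem \<open>n \<le> 2\<close>: the
  squaring map \<open>x \<mapsto> x\<^sup>2\<close> is an even, 2-homogeneous map whose fibres are exactly the pairs
  \<open>{x, - x}\<close>, so by invariance of domain it is a double cover of \<open>\<real>\<^sup>n - {0}\<close> by itself;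
  for \<open>n \<ge> 3\<close> this space is simply connected, and a section of the cover would choose one of
  \<open>\<pm>x\<close> continuously on a connected set.\<close>

section \<open>Commutative real division algebras\<close>

lemma scaleR_norm_sgn: "norm x *\<^sub>R sgn x = x"
  by (cases "x = 0") (simp_all add: sgn_div_norm)

locale squaring_map =
  fixes q :: "'a::euclidean_space \<Rightarrow> 'a"
  assumes continuous: "continuous_on UNIV q"
    and scaleR: "q (c *\<^sub>R x) = (c * c) *\<^sub>R q x"
    and eq_iff: "q x = q y \<longleftrightarrow> y = x \<or> y = - x"
begin

lemma minus [simp]: "q (- x) = q x"
  by (simp add: eq_iff)

lemma eq_0_iff [simp]: "q x = 0 \<longleftrightarrow> x = 0"
proof -
  have "q 0 = 0"
    using scaleR[of 0 0] by simp
  then show ?thesis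
    using eq_iff[of x 0] by auto
qed

lemma continuous_on_q: "continuous_on S q"
  using continuous by (rule continuous_on_subset) simp

lemma inj_on_halfspace: "inj_on q {x. 0 < v \<bullet> x}"
proof (rule inj_onI)
  fix x y
  assume "x \<in> {x. 0 < v \<bullet> x}" "y \<in> {x. 0 < v \<bullet> x}" "q x = q y"
  then show "x = y"
    using eq_iff by force
qed

lemma open_image_halfspace: "open (q ` {x. 0 < v \<bullet> x})"
  by (intro invariance_of_domain continuous_on_q inj_on_halfspace open_halfspace_gt)

lemma homeomorphism_halfspace:
  obtains g where "homeomorphism {x. 0 < v \<bullet> x} (q ` {x. 0 < v \<bullet> x}) q g"
  using invariance_of_domain_homeomorphism[OF open_halfspace_gt continuous_on_q order_refl
      inj_on_halfspace] .

lemma open_image_punctured: "open (q ` (- {0}))"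
proof -
  have "q ` (- {0}) = (\<Union>v\<in>- {0}. q ` {x. 0 < v \<bullet> x})"
    by force
  then show ?thesis
    using open_image_halfspace by auto
qed

lemma image_punctured_eq_cone: "q ` (- {0}) = {y \<in> - {0}. sgn y \<in> sgn ` q ` sphere 0 1}"
proof (intro equalityI subsetI)
  fix y
  assume "y \<in> q ` (- {0})"
  then obtain x where "x \<noteq> 0" "y = q x"
    by blast
  have "q x = (norm x * norm x) *\<^sub>R q (sgn x)"
    by (metis scaleR scaleR_norm_sgn)
  then have "sgn (q x) = sgn (q (sgn x))"
    using \<open>x \<noteq> 0\<close> by (simp add: sgn_scaleR)
  moreover have "sgn x \<in> sphere 0 1"
    using \<open>x \<noteq> 0\<close> by (simp add: norm_sgn)
  ultimately show "y \<in> {y \<in> - {0}. sgn y \<in> sgn ` q ` sphere 0 1}"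
    using \<open>x \<noteq> 0\<close> \<open>y = q x\<close> by auto
next
  fix y
  assume "y \<in> {y \<in> - {0}. sgn y \<in> sgn ` q ` sphere 0 1}"
  then obtain s where "y \<noteq> 0" "s \<in> sphere 0 1" "sgn y = sgn (q s)"
    by auto
  then have "s \<noteq> 0"
    by auto
  define c where "c = sqrt (norm y / norm (q s))"
  have "y = norm y *\<^sub>R sgn (q s)"
    by (metis \<open>sgn y = sgn (q s)\<close> scaleR_norm_sgn)
  also have "\<dots> = (c * c) *\<^sub>R q s"
    using \<open>s \<noteq> 0\<close> by (simp add: c_def sgn_div_norm divide_inverse)
  finally have "y = q (c *\<^sub>R s)"
    by (simp add: scaleR)
  moreover have "c *\<^sub>R s \<noteq> 0"
    using \<open>y \<noteq> 0\<close> \<open>s \<noteq> 0\<close> by (simp add: c_def)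
  ultimately show "y \<in> q ` (- {0})"
    by blast
qed

lemma closedin_image_punctured: "closedin (top_of_set (- {0})) (q ` (- {0}))"
proof -
  have "compact (sgn ` q ` sphere 0 1)"
  proof (intro compact_continuous_image continuous_on_q compact_sphere)
    have "0 \<notin> q ` sphere 0 1"
      by auto
    then show "continuous_on (q ` sphere 0 1) sgn"
      by (intro continuous_on_sgn continuous_on_id) auto
  qed
  moreover have "continuous_on (- {0}) (sgn :: 'a \<Rightarrow> 'a)"
    by (intro continuous_on_sgn continuous_on_id) auto
  ultimately have "closedin (top_of_set (- {0})) (- {0} \<inter> sgn -` (sgn ` q ` sphere 0 1))"
    using compact_imp_closed continuous_closedin_preimage by blast
  then show ?thesis
    unfolding image_punctured_eq_cone by (simp add: Int_def vimage_def)
qed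

lemma image_punctured:
  assumes "2 \<le> DIM('a)"
  shows "q ` (- {0}) = - {0}"
proof -
  have "connected (- {0 :: 'a})"
    using assms by (intro connected_punctured_universe) simp
  moreover have "openin (top_of_set (- {0})) (q ` (- {0}))"
    using open_image_punctured by (intro open_subset) auto
  moreover have "q ` (- {0 :: 'a}) \<noteq> {}"
    using nonempty_Basis nonzero_Basis by blast
  ultimately show ?thesis
    using closedin_image_punctured connected_clopen by blast
qed

lemma image_opposite_halfspace: "q ` {x. 0 < (- v) \<bullet> x} = q ` {x. 0 < v \<bullet> x}"
proof -
  have "{x. 0 < (- v) \<bullet> x} = uminus ` {x. 0 < v \<bullet> x}"
    by (auto simp: image_iff intro!: exI[of _ "- _"])
  then show ?thesis
    by (simp add: image_image)
qed

lemma preimage_image_halfspace: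
  "- {0} \<inter> q -` q ` {x. 0 < v \<bullet> x} = {x. 0 < v \<bullet> x} \<union> {x. 0 < (- v) \<bullet> x}"
proof (intro equalityI subsetI)
  fix x
  assume "x \<in> - {0} \<inter> q -` q ` {x. 0 < v \<bullet> x}"
  then obtain z where "x \<noteq> 0" "0 < v \<bullet> z" "q x = q z"
    by auto
  then show "x \<in> {x. 0 < v \<bullet> x} \<union> {x. 0 < (- v) \<bullet> x}"
    using eq_iff by force
next
  fix x
  assume "x \<in> {x. 0 < v \<bullet> x} \<union> {x. 0 < (- v) \<bullet> x}"
  moreover have "q ` {x. 0 < (- v) \<bullet> x} \<subseteq> q ` {x. 0 < v \<bullet> x}"
    by (simp only: image_opposite_halfspace)
  ultimately show "x \<in> - {0} \<inter> q -` q ` {x. 0 < v \<bullet> x}"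
    by auto
qed

text \<open>The sheets over \<open>q ` {x. 0 < v \<bullet> x}\<close> are the two opposite open half-spaces of \<open>v\<close>,
  each containing exactly one point of every fibre \<open>{z, - z}\<close>.\<close>

lemma covering_space_punctured:
  assumes "2 \<le> DIM('a)"
  shows "covering_space (- {0}) q (- {0})"
proof
  show "continuous_on (- {0}) q" "q ` (- {0}) = - {0}"
    using assms by (simp_all add: continuous_on_q image_punctured)
  fix y :: 'a
  assume "y \<in> - {0}"
  then have "y \<in> q ` (- {0})"
    using image_punctured[OF assms] by simp
  then obtain v where "v \<noteq> 0" "q v = y"
    by blast
  define H where "H w = {x. 0 < w \<bullet> x}" for w :: 'a
  have H_punctured: "H w \<subseteq> - {0}" for w
    by (auto simp: H_def)
  show "\<exists>T. y \<in> T \<and> openin (top_of_set (- {0})) T \<and>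
          (\<exists>U. \<Union>U = - {0} \<inter> q -` T \<and> (\<forall>u \<in> U. openin (top_of_set (- {0})) u) \<and>
          pairwise disjnt U \<and> (\<forall>u \<in> U. \<exists>g. homeomorphism u T q g))"
  proof (intro exI conjI)
    show "y \<in> q ` H v"
      using \<open>v \<noteq> 0\<close> \<open>q v = y\<close> by (auto simp: H_def)
    show "openin (top_of_set (- {0})) (q ` H v)"
      using open_image_halfspace H_punctured by (intro open_subset) (auto simp: H_def)
    show "\<Union>{H v, H (- v)} = - {0} \<inter> q -` q ` H v"
      unfolding H_def preimage_image_halfspace by simp
    show "\<forall>u\<in>{H v, H (- v)}. openin (top_of_set (- {0})) u"
      using H_punctured open_halfspace_gt
      by (auto simp: H_def simp del: inner_minus_left intro!: open_subset)
    show "pairwise disjnt {H v, H (- v)}"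
      by (auto simp: pairwise_def disjnt_def H_def)
    show "\<forall>u\<in>{H v, H (- v)}. \<exists>g. homeomorphism u (q ` H v) q g"
      using homeomorphism_halfspace[of v] homeomorphism_halfspace[of "- v"] image_opposite_halfspace[of v]
      unfolding H_def by (metis empty_iff insert_iff)
  qed
qed

end

lemma no_even_continuous_sign_selection:
  fixes f :: "'a::euclidean_space \<Rightarrow> 'a"
  assumes "2 \<le> DIM('a)" "continuous_on (- {0}) f"
    and even: "\<And>x. f (- x) = f x" and sign: "\<And>x. x \<noteq> 0 \<Longrightarrow> f x = x \<or> f x = - x"
  shows False
proof -
  define E where "E \<sigma> = {x \<in> - {0}. f x = \<sigma> *\<^sub>R x}" for \<sigma> :: real
  have "closedin (top_of_set (- {0})) (E \<sigma>)" for \<sigma>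
    using continuous_closedin_preimage_constant[of "- {0}" "\<lambda>x. f x - \<sigma> *\<^sub>R x" 0] assms(2)
    by (simp add: E_def continuous_on_diff continuous_on_scaleR continuous_on_const continuous_on_id)
  moreover have "- {0} \<subseteq> E 1 \<union> E (- 1)"
    using sign by (auto simp: E_def)
  moreover have "E 1 \<inter> E (- 1) = {}"
  proof -
    have "x = 0" if "x = - x" for x :: 'a
      using that by (metis eq_neg_iff_add_eq_0 scaleR_2 scaleR_eq_0_iff zero_neq_numeral)
    then show ?thesis
      by (auto simp: E_def)
  qed
  moreover have "E 1 \<noteq> {}" "E (- 1) \<noteq> {}"
  proof -
    obtain b :: 'a where "b \<noteq> 0"
      using nonempty_Basis nonzero_Basis by blast
    then have "b \<in> E 1 \<and> - b \<in> E (- 1) \<or> b \<in> E (- 1) \<and> - b \<in> E 1"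
      using sign[of b] even[of b] by (auto simp: E_def)
    then show "E 1 \<noteq> {}" "E (- 1) \<noteq> {}"
      by blast+
  qed
  moreover have "connected (- {0 :: 'a})"
    using assms(1) by (intro connected_punctured_universe) simp
  ultimately show False
    unfolding connected_closedin by blast
qed

theorem squaring_map_DIM_le_2:
  fixes q :: "'a::euclidean_space \<Rightarrow> 'a"
  assumes "squaring_map q"
  shows "DIM('a) \<le> 2"
proof (rule ccontr)
  interpret squaring_map q
    by (fact assms)
  assume "\<not> DIM('a) \<le> 2"
  then have dim: "3 \<le> DIM('a)"
    by simp
  have "covering_space (- {0}) q (- {0})"
    using dim by (intro covering_space_punctured) simp
  moreover have "simply_connected (- {0 :: 'a})"
    using dim by (rule simply_connected_punctured_universe)
  moreover have "locally path_connected (- {0 :: 'a})"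
    by (rule open_imp_locally_path_connected) (simp add: open_Compl)
  ultimately obtain s where s: "continuous_on (- {0}) s" "s \<in> - {0} \<rightarrow> - {0}"
      "\<And>y. y \<in> - {0} \<Longrightarrow> q (s y) = id y"
    by (rule covering_space_lift[where f = id]) (auto simp: continuous_on_id)
  have "continuous_on (- {0}) (s \<circ> q)"
    using continuous_on_q image_punctured dim s(1) by (intro continuous_on_compose) auto
  moreover have "(s \<circ> q) x = x \<or> (s \<circ> q) x = - x" if "x \<noteq> 0" for x
    using eq_iff[of x "s (q x)"] s(3)[of "q x"] that by auto
  ultimately show False
    using dim by (intro no_even_continuous_sign_selection[of "s \<circ> q"]) auto
qed

lemma squaring_map_bilinear:
  fixes m :: "'a::euclidean_space \<Rightarrow> 'a \<Rightarrow> 'a"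
  assumes bilinear: "bilinear m"
    and commute: "\<And>x y. m x y = m y x"
    and nonzero: "\<And>x y. x \<noteq> 0 \<Longrightarrow> y \<noteq> 0 \<Longrightarrow> m x y \<noteq> 0"
  shows "squaring_map (\<lambda>x. m x x)"
proof
  show "continuous_on UNIV (\<lambda>x. m x x)"
    by (rule bilinear_continuous_on_compose[OF continuous_on_id continuous_on_id bilinear])
  show "m (c *\<^sub>R x) (c *\<^sub>R x) = (c * c) *\<^sub>R m x x" for c x
    using bilinear by (simp add: bilinear_lmul bilinear_rmul)
  fix x y :: 'a
  show "m x x = m y y \<longleftrightarrow> y = x \<or> y = - x"
  proof
    assume "m x x = m y y"
    moreover have "m x x - m y y = m (x - y) (x + y)"
      using bilinear commute[of x y] by (simp add: bilinear_lsub bilinear_radd)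
    ultimately have "m (x - y) (x + y) = 0"
      by simp
    then have "x - y = 0 \<or> x + y = 0"
      using nonzero by blast
    then show "y = x \<or> y = - x"
      by (metis add.commute eq_iff_diff_eq_0 eq_neg_iff_add_eq_0)
  next
    assume "y = x \<or> y = - x"
    then show "m x x = m y y"
      using bilinear by (auto simp: bilinear_lneg bilinear_rneg)
  qed
qed

corollary commutative_nonsingular_bilinear_DIM_le_2:
  fixes m :: "'a::euclidean_space \<Rightarrow> 'a \<Rightarrow> 'a"
  assumes "bilinear m" "\<And>x y. m x y = m y x" "\<And>x y. x \<noteq> 0 \<Longrightarrow> y \<noteq> 0 \<Longrightarrow> m x y \<noteq> 0"
  shows "DIM('a) \<le> 2"
  using squaring_map_DIM_le_2[OF squaring_map_bilinear[OF assms]] .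

section \<open>Charts of Lagrangian submanifolds\<close>

lemma has_derivative_compose_fst:
  "(f has_derivative f') (at (fst p)) \<Longrightarrow> ((\<lambda>q. f (fst q)) has_derivative (\<lambda>q. f' (fst q))) (at p)"
  by (rule has_derivative_compose[OF has_derivative_fst[OF has_derivative_ident]])

lemma smooth_on_has_derivative:
  assumes "smooth_on S f" "x \<in> S"
  shows "(f has_derivative frechet_derivative f (at x)) (at x)"
  using assms by (auto elim: smooth_on.cases simp: frechet_derivative_works)

lemma smooth_on_frechet_derivative:
  assumes "smooth_on S f"
  shows "smooth_on S (\<lambda>x. frechet_derivative f (at x) v)"
  using assms by (auto elim: smooth_on.cases)

lemma linear_omega_left: "linear (\<lambda>p. omega p q)"
  by (rule linearI) (auto simp: omega_def inner_add_left algebra_simps)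

lemma linear_omega_right: "linear (\<lambda>q. omega p q)"
  by (rule linearI) (auto simp: omega_def inner_add_right algebra_simps)

lemma omega_antisym: "omega p q = - omega q p"
  by (simp add: omega_def inner_commute)

lemma omega_complex_structure_pos:
  assumes "w \<noteq> 0"
  shows "0 < omega (snd w, - fst w) w"
proof -
  have "fst w \<noteq> 0 \<or> snd w \<noteq> 0"
    using assms by (simp add: prod_eq_iff)
  then show ?thesis
    by (auto simp: omega_def add_pos_nonneg add_nonneg_pos)
qed

lemma has_derivative_omega:
  assumes "(f has_derivative f') (at x)" "(g has_derivative g') (at x)"
  shows "((\<lambda>y. omega (f y) (g y)) has_derivative (\<lambda>h. omega (f' h) (g x) + omega (f x) (g' h))) (at x)"
  unfolding omega_def
  by (rule derivative_eq_intros has_derivative_fst has_derivative_snd assms | simp)+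
     (auto simp: algebra_simps inner_commute)

lemma omega_derivative_isotropic:
  assumes "open V" "u \<in> V" "\<And>y. y \<in> V \<Longrightarrow> omega (f y) (g y) = 0"
    and "(f has_derivative f') (at u)" "(g has_derivative g') (at u)"
  shows "omega (f' h) (g u) = omega (g' h) (f u)"
proof -
  have "((\<lambda>y. omega (f y) (g y)) has_derivative (\<lambda>h. 0)) (at u)"
    using assms(1-3) by (intro has_derivative_transform_within_open[OF has_derivative_const]) auto
  then have "(\<lambda>h. omega (f' h) (g u) + omega (f u) (g' h)) = (\<lambda>h. 0)"
    using has_derivative_omega[OF assms(4,5)] by (rule has_derivative_unique[rotated])
  then show ?thesis
    by (metis add_eq_0_iff omega_antisym)
qed

lemma linear_basis_expansion:
  fixes f :: "'a::euclidean_space \<Rightarrow> 'b::real_vector"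
  assumes "linear f"
  shows "f x = (\<Sum>b\<in>Basis. (x \<bullet> b) *\<^sub>R f b)"
proof -
  have "f x = f (\<Sum>b\<in>Basis. (x \<bullet> b) *\<^sub>R b)"
    by (simp add: euclidean_representation)
  also have "\<dots> = (\<Sum>b\<in>Basis. (x \<bullet> b) *\<^sub>R f b)"
    using assms by (simp add: linear_sum linear_scale)
  finally show ?thesis .
qed

context
  fixes D :: "'a::real_normed_vector \<Rightarrow> 'k::euclidean_space \<Rightarrow> 'b::real_normed_vector"
    and T :: "'k \<Rightarrow> 'a \<Rightarrow> 'b" and V u
  assumes open_V: "open V" and u_in_V: "u \<in> V"
    and linear_D: "\<And>y. y \<in> V \<Longrightarrow> linear (D y)"
    and has_derivative_D: "\<And>c. ((\<lambda>y. D y c) has_derivative T c) (at u)"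
begin

lemma linear_family_expansion: "y \<in> V \<Longrightarrow> D y c = (\<Sum>b\<in>Basis. (c \<bullet> b) *\<^sub>R D y b)"
  using linear_D by (rule linear_basis_expansion)

lemma derivative_linear_family_expansion: "T c h = (\<Sum>b\<in>Basis. (c \<bullet> b) *\<^sub>R T b h)"
proof -
  have "((\<lambda>y. \<Sum>b\<in>Basis. (c \<bullet> b) *\<^sub>R D y b) has_derivative
      (\<lambda>h. \<Sum>b\<in>Basis. (c \<bullet> b) *\<^sub>R T b h)) (at u)"
    by (intro has_derivative_sum has_derivative_scaleR_right has_derivative_D)
  then have "((\<lambda>y. D y c) has_derivative (\<lambda>h. \<Sum>b\<in>Basis. (c \<bullet> b) *\<^sub>R T b h)) (at u)"
    by (rule has_derivative_transform_within_open[OF _ open_V u_in_V])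
      (simp add: linear_family_expansion)
  then show ?thesis
    using has_derivative_unique[OF has_derivative_D] by metis
qed

lemma has_derivative_linear_family_apply:
  "((\<lambda>(y, c). D y c) has_derivative (\<lambda>(h, c). T a h + D u c)) (at (u, a))"
proof -
  have "((\<lambda>p. snd p \<bullet> b) has_derivative (\<lambda>p. snd p \<bullet> b)) (at (u, a))" for b :: 'k
    by (intro has_derivative_inner_left has_derivative_snd has_derivative_ident)
  moreover have "((\<lambda>p. D (fst p) b) has_derivative (\<lambda>p. T b (fst p))) (at (u, a))" for b
    using has_derivative_D by (intro has_derivative_compose_fst) simp
  ultimately have "((\<lambda>p. \<Sum>b\<in>Basis. (snd p \<bullet> b) *\<^sub>R D (fst p) b) has_derivative
      (\<lambda>p. \<Sum>b\<in>Basis. (snd (u, a) \<bullet> b) *\<^sub>R T b (fst p) + (snd p \<bullet> b) *\<^sub>R D (fst (u, a)) b))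
      (at (u, a))"
    by (intro has_derivative_sum has_derivative_scaleR)
  moreover have "(\<lambda>p. \<Sum>b\<in>Basis. (snd (u, a) \<bullet> b) *\<^sub>R T b (fst p) + (snd p \<bullet> b) *\<^sub>R D (fst (u, a)) b) =
      (\<lambda>(h, c). T a h + D u c)"
  proof (rule ext)
    fix p :: "'a \<times> 'k"
    obtain h c where "p = (h, c)"
      by fastforce
    then show "(\<Sum>b\<in>Basis. (snd (u, a) \<bullet> b) *\<^sub>R T b (fst p) + (snd p \<bullet> b) *\<^sub>R D (fst (u, a)) b) =
        (case p of (h, c) \<Rightarrow> T a h + D u c)"
      by (simp add: sum.distrib derivative_linear_family_expansion[of a h]
          linear_family_expansion[OF u_in_V, of c])
  qed
  ultimately have "((\<lambda>p. \<Sum>b\<in>Basis. (snd p \<bullet> b) *\<^sub>R D (fst p) b) has_derivative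
      (\<lambda>(h, c). T a h + D u c)) (at (u, a))"
    by simp
  then show ?thesis
    by (rule has_derivative_transform_within_open[where s = "V \<times> UNIV"])
      (use open_V u_in_V in \<open>auto simp: open_Times linear_family_expansion[symmetric]\<close>)
qed

end

lemma isotropic_surj_pairing_nonzero:
  fixes A T :: "'k \<Rightarrow> (real^'n) \<times> (real^'n)"
  assumes surj: "surj (\<lambda>(h, c). A h + T h + A c)"
    and isotropic: "\<And>x y. omega (A x) (A y) = 0"
    and "A k \<noteq> 0"
  shows "\<exists>h. omega (T h) (A k) \<noteq> 0"
proof -
  obtain h c where hc: "A h + T h + A c = (snd (A k), - fst (A k))"
    using surj by (metis (no_types, lifting) case_prod_conv surj_def surj_pair)
  have "0 < omega (A h + T h + A c) (A k)"
    unfolding hc using \<open>A k \<noteq> 0\<close> by (rule omega_complex_structure_pos)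
  also have "\<dots> = omega (T h) (A k)"
    using isotropic by (simp add: linear_add[OF linear_omega_left])
  finally show ?thesis
    by (metis less_irrefl)
qed

lemma lagrangian_chart_isotropic:
  fixes \<phi> :: "real^'n \<Rightarrow> (real^'n) \<times> (real^'n)"
  assumes "lagrangian L" "local_param \<phi> V L" "y \<in> V"
  shows "omega (frechet_derivative \<phi> (at y) a) (frechet_derivative \<phi> (at y) c) = 0"
proof -
  have "\<phi> y \<in> L"
    using assms(2,3) unfolding local_param_def by blast
  moreover have "frechet_derivative \<phi> (at y) v \<in> tangent_space TYPE(real^'n) L (\<phi> y)" for v
    unfolding tangent_space_def using assms(2,3) by blast
  ultimately show ?thesis
    using assms(1) unfolding lagrangian_def by blast
qed

definition second_derivative ::
  "('a::real_normed_vector \<Rightarrow> 'b::real_normed_vector) \<Rightarrow> 'a \<Rightarrow> 'a \<Rightarrow> 'a \<Rightarrow> 'b"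
  where "second_derivative \<phi> u a = frechet_derivative (\<lambda>y. frechet_derivative \<phi> (at y) a) (at u)"

lemma smooth_on_has_second_derivative:
  assumes "smooth_on V \<phi>" "u \<in> V"
  shows "((\<lambda>y. frechet_derivative \<phi> (at y) a) has_derivative second_derivative \<phi> u a) (at u)"
  unfolding second_derivative_def
  using smooth_on_frechet_derivative[OF assms(1)] assms(2) by (rule smooth_on_has_derivative)

lemma has_derivative_tangent_sum:
  fixes \<phi> :: "'k::euclidean_space \<Rightarrow> 'b::real_normed_vector"
  assumes "open V" "smooth_on V \<phi>" "u \<in> V"
  shows "((\<lambda>(y, c). \<phi> y + frechet_derivative \<phi> (at y) c) has_derivative
      (\<lambda>(h, c). frechet_derivative \<phi> (at u) h + second_derivative \<phi> u a h + frechet_derivative \<phi> (at u) c))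
      (at (u, a))"
proof -
  have has_derivative_\<phi>: "(\<phi> has_derivative frechet_derivative \<phi> (at y)) (at y)" if "y \<in> V" for y
    using assms(2) that by (rule smooth_on_has_derivative)
  then have "((\<lambda>p. \<phi> (fst p)) has_derivative (\<lambda>p. frechet_derivative \<phi> (at u) (fst p))) (at (u, a))"
    using assms(3) by (intro has_derivative_compose_fst) simp
  moreover have "((\<lambda>(y, c). frechet_derivative \<phi> (at y) c) has_derivative
      (\<lambda>(h, c). second_derivative \<phi> u a h + frechet_derivative \<phi> (at u) c)) (at (u, a))"
    using assms(1,3) has_derivative_linear[OF has_derivative_\<phi>]
      smooth_on_has_second_derivative[OF assms(2,3)]
    by (rule has_derivative_linear_family_apply)
  ultimately show ?thesis
    using has_derivative_add by (fastforce simp: case_prod_beta' add.assoc)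
qed

lemma lagrangian_second_derivative_symmetric:
  fixes \<phi> :: "real^'n \<Rightarrow> (real^'n) \<times> (real^'n)"
  assumes "lagrangian L" "local_param \<phi> V L" "u \<in> V"
  shows "omega (second_derivative \<phi> u a h) (frechet_derivative \<phi> (at u) c) =
    omega (second_derivative \<phi> u c h) (frechet_derivative \<phi> (at u) a)"
proof -
  have "open V" "smooth_on V \<phi>"
    using assms(2) unfolding local_param_def by auto
  then show ?thesis
    using omega_derivative_isotropic[OF \<open>open V\<close> assms(3) lagrangian_chart_isotropic[OF assms(1,2)]
        smooth_on_has_second_derivative smooth_on_has_second_derivative]
      assms(3) by blast
qed

lemma noncritical_second_derivative_pairing:
  fixes \<phi> :: "real^'n \<Rightarrow> (real^'n) \<times> (real^'n)"
  assumes "lagrangian L" "local_param \<phi> V L" "u \<in> V"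
    and "\<not> Psi_critical L (\<phi> u) (frechet_derivative \<phi> (at u) a)"
    and "frechet_derivative \<phi> (at u) k \<noteq> 0"
  shows "\<exists>h. omega (second_derivative \<phi> u a h) (frechet_derivative \<phi> (at u) k) \<noteq> 0"
proof -
  have "open V" "smooth_on V \<phi>" "\<phi> u \<in> L"
    using assms(2,3) unfolding local_param_def by auto
  moreover have "frechet_derivative \<phi> (at u) a \<in> tangent_space TYPE(real^'n) L (\<phi> u)"
    unfolding tangent_space_def using assms(2,3) by blast
  ultimately have "surj (frechet_derivative (\<lambda>(y, c). \<phi> y + frechet_derivative \<phi> (at y) c) (at (u, a)))"
    using assms(2-4) unfolding Psi_critical_def by blast
  then have "surj (\<lambda>(h, c). frechet_derivative \<phi> (at u) h + second_derivative \<phi> u a h +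
      frechet_derivative \<phi> (at u) c)"
    unfolding frechet_derivative_at[OF has_derivative_tangent_sum[OF \<open>open V\<close> \<open>smooth_on V \<phi>\<close> assms(3)],
        symmetric] .
  then show ?thesis
    using lagrangian_chart_isotropic[OF assms(1-3)] assms(5) by (rule isotropic_surj_pairing_nonzero)
qed

text \<open>\<open>m\<close> is the second fundamental form of \<open>L\<close> at \<open>X\<close>, turned into a vector by the
  symplectic pairing with the tangent space: \<open>h \<bullet> m a k = \<omega>(D\<^sup>2\<phi>(u)(h, a), D\<phi>(u) k)\<close>.\<close>

lemma lagrangian_noncritical_fibre_bilinear:
  fixes L :: "((real^'n) \<times> (real^'n)) set"
  assumes lagrangian: "lagrangian L" and "X \<in> L"
    and noncritical: "\<And>W. W \<in> tangent_space TYPE(real^'n) L X \<Longrightarrow> Psi_critical L X W \<Longrightarrow> W = 0"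
  obtains m :: "real^'n \<Rightarrow> real^'n \<Rightarrow> real^'n"
  where "bilinear m" "\<And>x y. m x y = m y x" "\<And>x y. x \<noteq> 0 \<Longrightarrow> y \<noteq> 0 \<Longrightarrow> m x y \<noteq> 0"
proof -
  obtain \<phi> :: "real^'n \<Rightarrow> (real^'n) \<times> (real^'n)" and V u
    where chart: "local_param \<phi> V L" "u \<in> V" "\<phi> u = X"
    using lagrangian \<open>X \<in> L\<close> unfolding lagrangian_def submanifold_dim_def by blast
  then have "smooth_on V \<phi>" "inj (frechet_derivative \<phi> (at u))"
    unfolding local_param_def by auto
  define A where "A = frechet_derivative \<phi> (at u)"
  define m where "m a k = (\<Sum>b\<in>Basis. omega (second_derivative \<phi> u a b) (A k) *\<^sub>R b)" for a k
  have "linear A"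
    unfolding A_def using smooth_on_has_derivative[OF \<open>smooth_on V \<phi>\<close> chart(2)]
    by (rule has_derivative_linear)
  have m_commute: "m a k = m k a" for a k
    using lagrangian_second_derivative_symmetric[OF lagrangian chart(1,2)] by (simp add: m_def A_def)
  have "linear (m a)" for a
  proof (rule linearI)
    fix k k' :: "real^'n" and r :: real
    show "m a (k + k') = m a k + m a k'"
      by (simp add: m_def linear_add[OF \<open>linear A\<close>] linear_add[OF linear_omega_right]
          scaleR_add_left sum.distrib)
    show "m a (r *\<^sub>R k) = r *\<^sub>R m a k"
      by (simp add: m_def linear_scale[OF \<open>linear A\<close>] linear_scale[OF linear_omega_right]
          scaleR_sum_right)
  qed
  moreover have "(\<lambda>a. m a k) = m k" for k
    using m_commute by (rule ext)
  ultimately have "bilinear m"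
    unfolding bilinear_def by simp
  moreover have inner_m: "h \<bullet> m a k = omega (second_derivative \<phi> u a h) (A k)" for a k h
  proof -
    have "linear (second_derivative \<phi> u a)"
      using smooth_on_has_second_derivative[OF \<open>smooth_on V \<phi>\<close> chart(2)] by (rule has_derivative_linear)
    then have "second_derivative \<phi> u a h = (\<Sum>b\<in>Basis. (h \<bullet> b) *\<^sub>R second_derivative \<phi> u a b)"
      by (rule linear_basis_expansion)
    then show ?thesis
      by (simp add: m_def inner_sum_right linear_sum[OF linear_omega_left]
          linear_scale[OF linear_omega_left] mult.commute)
  qed
  moreover have "m a k \<noteq> 0" if "a \<noteq> 0" "k \<noteq> 0" for a k
  proof -
    have "A a \<noteq> 0" "A k \<noteq> 0"
      using that \<open>inj (frechet_derivative \<phi> (at u))\<close> \<open>linear A\<close> by (metis A_def inj_eq linear_0)+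
    moreover have "A a \<in> tangent_space TYPE(real^'n) L X"
      unfolding tangent_space_def A_def using chart by blast
    ultimately have "\<not> Psi_critical L (\<phi> u) (A a)"
      using noncritical chart(3) by blast
    then obtain h where "omega (second_derivative \<phi> u a h) (A k) \<noteq> 0"
      using noncritical_second_derivative_pairing[OF lagrangian chart(1,2)] \<open>A k \<noteq> 0\<close>
      unfolding A_def by blast
    then show ?thesis
      using inner_m by (metis inner_zero_right)
  qed
  ultimately show thesis
    using m_commute that by blast
qed

theorem mainTheorem10:
  fixes L :: "((real^'n) \<times> (real^'n)) set"
  assumes "lagrangian L"
    and "\<exists>X\<in>L. {W \<in> tangent_space TYPE(real^'n) L X. Psi_critical L X W} = {0}"
  shows "CARD('n) \<in> {1, 2}"
proof -
  obtain X where "X \<in> L"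
    and "{W \<in> tangent_space TYPE(real^'n) L X. Psi_critical L X W} = {0}"
    using assms(2) by blast
  then have "W = 0" if "W \<in> tangent_space TYPE(real^'n) L X" "Psi_critical L X W" for W
    using that by blast
  then obtain m :: "real^'n \<Rightarrow> real^'n \<Rightarrow> real^'n"
    where "bilinear m" "\<And>x y. m x y = m y x" "\<And>x y. x \<noteq> 0 \<Longrightarrow> y \<noteq> 0 \<Longrightarrow> m x y \<noteq> 0"
    using lagrangian_noncritical_fibre_bilinear[OF assms(1) \<open>X \<in> L\<close>] by blast
  then have "CARD('n) \<le> 2"
    using commutative_nonsingular_bilinear_DIM_le_2 by fastforce
  moreover have "0 < CARD('n)"
    by simp
  ultimately have "CARD('n) = 1 \<or> CARD('n) = 2"
    by linarith
  then show ?thesis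
    by simp
qed

end
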